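(* Let $\mathcal E$ be a nest on a complex Banach space $X$ and let $\mathcal J$ be a $\mathcal T(\mathcal E)$-bimodule that is closed in the weak operator topology. Then $\mathcal J$ and $\mathcal M(\Phi_{\mathcal J})$ contain exactly the same finite rank operators.
   Context: A nest $\mathcal E$ on $X$ is a family of closed linear subspaces of $X$, totally ordered by inclusion, containing $\{0\}$ and $X$, closed under arbitrary meets (intersections) and joins (norm-closed linear spans of unions). $\mathcal T(\mathcal E)=\{T\in\mathcal B(X): TE\subseteq E\ \forall E\in\mathcal E\}$. A $\mathcal T(\mathcal E)$-bimodule is a linear subspace $\mathcal J\subseteq\mathcal B(X)$ with $\mathcal T(\mathcal E)\mathcal J\subseteq\mathcal J$ and $\mathcal J\mathcal T(\mathcal E)\subseteq\mathcal J$. $\Phi_{\mathcal J}:\mathcal E\to\mathcal E$ is $\Phi_{\mathcal J}(E)=[\mathcal JE]$, the norm-closed linear span of $\{Tx:T\in\mathcal J,x\in E\}$ (this lies in $\mathcal E$). For a map $\Phi:\mathcal E\to\mathcal E$, $\mathcal M(\Phi)=\{T\in\mathcal B(X): TE\subseteq\Phi(E)\ \forall E\in\mathcal E\}$. *)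

theory Defs
  imports "HOL-Analysis.Analysis"
begin

text \<open>A complex Banach space is
modelled as a real Banach space (type class banach) together with a complex scalar
multiplication cm extending the real one and compatible with the norm.\<close>

definition cbanach :: "(complex \<Rightarrow> 'a::banach \<Rightarrow> 'a) \<Rightarrow> bool" where
  "cbanach cm \<longleftrightarrow>
     (\<forall>c d x. cm (c + d) x = cm c x + cm d x) \<and>
     (\<forall>c x y. cm c (x + y) = cm c x + cm c y) \<and>
     (\<forall>c d x. cm (c * d) x = cm c (cm d x)) \<and>
     (\<forall>r x. cm (complex_of_real r) x = r *\<^sub>R x) \<and>
     (\<forall>c x. norm (cm c x) = cmod c * norm x)"

definition bop :: "(complex \<Rightarrow> 'a::banach \<Rightarrow> 'a) \<Rightarrow> ('a \<Rightarrow> 'a) \<Rightarrow> bool" where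
  "bop cm T \<longleftrightarrow> bounded_linear T \<and> (\<forall>c x. T (cm c x) = cm c (T x))"

definition csubspace :: "(complex \<Rightarrow> 'a::banach \<Rightarrow> 'a) \<Rightarrow> 'a set \<Rightarrow> bool" where
  "csubspace cm E \<longleftrightarrow> 0 \<in> E \<and> (\<forall>x\<in>E. \<forall>y\<in>E. x + y \<in> E) \<and> (\<forall>c. \<forall>x\<in>E. cm c x \<in> E)"

definition cspan :: "(complex \<Rightarrow> 'a::banach \<Rightarrow> 'a) \<Rightarrow> 'a set \<Rightarrow> 'a set" where
  "cspan cm A = \<Inter>{E. csubspace cm E \<and> A \<subseteq> E}"

definition cclspan :: "(complex \<Rightarrow> 'a::banach \<Rightarrow> 'a) \<Rightarrow> 'a set \<Rightarrow> 'a set" where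
  "cclspan cm A = closure (cspan cm A)"

definition nest :: "(complex \<Rightarrow> 'a::banach \<Rightarrow> 'a) \<Rightarrow> 'a set set \<Rightarrow> bool" where
  "nest cm N \<longleftrightarrow>
     (\<forall>E\<in>N. csubspace cm E \<and> closed E) \<and>
     (\<forall>E\<in>N. \<forall>F\<in>N. E \<subseteq> F \<or> F \<subseteq> E) \<and>
     {0} \<in> N \<and> UNIV \<in> N \<and>
     (\<forall>S. S \<subseteq> N \<longrightarrow> \<Inter>S \<in> N) \<and>
     (\<forall>S. S \<subseteq> N \<longrightarrow> cclspan cm (\<Union>S) \<in> N)"

definition nest_alg :: "(complex \<Rightarrow> 'a::banach \<Rightarrow> 'a) \<Rightarrow> 'a set set \<Rightarrow> ('a \<Rightarrow> 'a) set" where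
  "nest_alg cm N = {T. bop cm T \<and> (\<forall>E\<in>N. T ` E \<subseteq> E)}"

definition bimodule :: "(complex \<Rightarrow> 'a::banach \<Rightarrow> 'a) \<Rightarrow> 'a set set \<Rightarrow> ('a \<Rightarrow> 'a) set \<Rightarrow> bool" where
  "bimodule cm N J \<longleftrightarrow>
     (\<forall>T\<in>J. bop cm T) \<and> (\<lambda>x. 0) \<in> J \<and>
     (\<forall>S\<in>J. \<forall>T\<in>J. (\<lambda>x. S x + T x) \<in> J) \<and>
     (\<forall>c. \<forall>T\<in>J. (\<lambda>x. cm c (T x)) \<in> J) \<and>
     (\<forall>A\<in>nest_alg cm N. \<forall>T\<in>J. A \<circ> T \<in> J \<and> T \<circ> A \<in> J)"

definition cdual :: "(complex \<Rightarrow> 'a::banach \<Rightarrow> 'a) \<Rightarrow> ('a \<Rightarrow> complex) \<Rightarrow> bool" where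
  "cdual cm \<phi> \<longleftrightarrow> (\<forall>x y. \<phi> (x + y) = \<phi> x + \<phi> y) \<and> (\<forall>c x. \<phi> (cm c x) = c * \<phi> x) \<and>
     (\<exists>K. \<forall>x. cmod (\<phi> x) \<le> K * norm x)"

text \<open>Closedness in the weak operator topology of B(X): every operator in B(X) all of
whose basic WOT neighbourhoods (given by finitely many pairs x, phi and e > 0) meet J
lies in J.\<close>
definition wot_closed :: "(complex \<Rightarrow> 'a::banach \<Rightarrow> 'a) \<Rightarrow> ('a \<Rightarrow> 'a) set \<Rightarrow> bool" where
  "wot_closed cm J \<longleftrightarrow>
     (\<forall>T. bop cm T \<longrightarrow>
        (\<forall>F::('a \<times> ('a \<Rightarrow> complex)) set. finite F \<longrightarrow> (\<forall>(x,\<phi>)\<in>F. cdual cm \<phi>) \<longrightarrow>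
           (\<forall>e>0. \<exists>S\<in>J. \<forall>(x,\<phi>)\<in>F. cmod (\<phi> (S x) - \<phi> (T x)) < e)) \<longrightarrow> T \<in> J)"

definition PhiJ :: "(complex \<Rightarrow> 'a::banach \<Rightarrow> 'a) \<Rightarrow> ('a \<Rightarrow> 'a) set \<Rightarrow> 'a set \<Rightarrow> 'a set" where
  "PhiJ cm J E = cclspan cm {T x | T x. T \<in> J \<and> x \<in> E}"

definition Mphi :: "(complex \<Rightarrow> 'a::banach \<Rightarrow> 'a) \<Rightarrow> 'a set set \<Rightarrow> ('a set \<Rightarrow> 'a set) \<Rightarrow> ('a \<Rightarrow> 'a) set" where
  "Mphi cm N \<Phi> = {T. bop cm T \<and> (\<forall>E\<in>N. T ` E \<subseteq> \<Phi> E)}"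

definition finite_rank :: "(complex \<Rightarrow> 'a::banach \<Rightarrow> 'a) \<Rightarrow> ('a \<Rightarrow> 'a) \<Rightarrow> bool" where
  "finite_rank cm T \<longleftrightarrow> bop cm T \<and> (\<exists>B. finite B \<and> range T \<subseteq> cspan cm B)"

end

theory Submission
  imports Defs
begin

text \<open>In fact M(Phi_J) = J.
  An operator T in M(Phi_J) is approximated by members of J on any finite set of vectors, by
  induction on its size. For a new vector v outside span Q, the join K of the immediate
  successors E+ of those nest elements E with v outside span (E \<union> Q) satisfies v \<in> K + span Q.
  Composing S \<in> J with the rank one operators x \<mapsto> f(x) y of the nest algebra, where f is a
  Hahn-Banach functional vanishing on E \<union> Q with f(v) = 1 and y \<in> E+, shows that every S y with
  y \<in> K is a limit of vectors S' v with S' \<in> J vanishing on Q; since T K \<subseteq> [J K], so is T k.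
  Strong approximation on finite sets implies approximation in the weak operator topology,
  hence T \<in> J.\<close>

section \<open>Real Hahn-Banach theorem\<close>

text \<open>Partial linear functionals dominated by C \<parallel>x\<parallel> are handled through their graphs, so that
  Zorn's lemma can be applied to the subset order.\<close>

definition dominated_linear_graph :: "real \<Rightarrow> ('a::real_normed_vector \<times> real) set \<Rightarrow> bool" where
  "dominated_linear_graph C g \<longleftrightarrow> single_valued g \<and>
     (\<forall>x a y b. (x, a) \<in> g \<longrightarrow> (y, b) \<in> g \<longrightarrow> (x + y, a + b) \<in> g) \<and>
     (\<forall>x a r. (x, a) \<in> g \<longrightarrow> (r *\<^sub>R x, r * a) \<in> g) \<and>
     (\<forall>x a. (x, a) \<in> g \<longrightarrow> a \<le> C * norm x)"

lemma dominated_linear_graphD: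
  assumes "dominated_linear_graph C g"
  shows dominated_linear_graph_single_valued: "\<And>x a b. (x, a) \<in> g \<Longrightarrow> (x, b) \<in> g \<Longrightarrow> a = b"
    and dominated_linear_graph_add: "\<And>x a y b. (x, a) \<in> g \<Longrightarrow> (y, b) \<in> g \<Longrightarrow> (x + y, a + b) \<in> g"
    and dominated_linear_graph_scaleR: "\<And>x a r. (x, a) \<in> g \<Longrightarrow> (r *\<^sub>R x, r * a) \<in> g"
    and dominated_linear_graph_bound: "\<And>x a. (x, a) \<in> g \<Longrightarrow> a \<le> C * norm x"
  using assms unfolding dominated_linear_graph_def single_valued_def by blast+

lemma dominated_extension_value:
  assumes C: "C \<ge> 0" and g: "dominated_linear_graph C g" and "(0, 0) \<in> g"
  obtains c where "\<And>x a. (x, a) \<in> g \<Longrightarrow> a - C * norm (x - z) \<le> c"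
    and "\<And>x a. (x, a) \<in> g \<Longrightarrow> c \<le> C * norm (x + z) - a"
proof -
  have gap: "a - C * norm (x - z) \<le> C * norm (y + z) - b" if "(x, a) \<in> g" "(y, b) \<in> g" for x a y b
  proof -
    have "a + b \<le> C * norm (x + y)"
      using dominated_linear_graph_bound[OF g dominated_linear_graph_add[OF g that]] .
    also have "\<dots> \<le> C * (norm (x - z) + norm (y + z))"
      using norm_triangle_ineq[of "x - z" "y + z"] C by (simp add: mult_left_mono)
    finally show ?thesis by (simp add: algebra_simps)
  qed
  define L where "L = {a - C * norm (x - z) | x a. (x, a) \<in> g}"
  have "L \<noteq> {}" using \<open>(0, 0) \<in> g\<close> unfolding L_def by blast
  moreover have "bdd_above L"
    unfolding L_def bdd_above_def using gap[OF _ \<open>(0, 0) \<in> g\<close>] by force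
  ultimately show ?thesis
    using that[of "Sup L"] cSup_upper[of _ L] cSup_least[of L] gap unfolding L_def by blast
qed

lemma dominated_extension_bound:
  assumes g: "dominated_linear_graph C g"
    and lo: "\<And>x a. (x, a) \<in> g \<Longrightarrow> a - C * norm (x - z) \<le> c"
    and hi: "\<And>x a. (x, a) \<in> g \<Longrightarrow> c \<le> C * norm (x + z) - a"
    and xa: "(x, a) \<in> g"
  shows "a + t * c \<le> C * norm (x + t *\<^sub>R z)"
proof (cases t "0 :: real" rule: linorder_cases)
  case less
  define s where "s = - t"
  have s: "s > 0" using less s_def by simp
  have "(1 / s) * a - C * norm ((1 / s) *\<^sub>R x - z) \<le> c"
    using lo[OF dominated_linear_graph_scaleR[OF g xa, of "1 / s"]] by simp
  then have "s * ((1 / s) * a - C * norm ((1 / s) *\<^sub>R x - z)) \<le> s * c"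
    using s by (simp add: mult_left_mono)
  moreover have "s * norm ((1 / s) *\<^sub>R x - z) = norm (x + t *\<^sub>R z)"
  proof -
    have "s * norm ((1 / s) *\<^sub>R x - z) = norm (s *\<^sub>R ((1 / s) *\<^sub>R x - z))" using s by simp
    also have "s *\<^sub>R ((1 / s) *\<^sub>R x - z) = x + t *\<^sub>R z"
      using s by (simp add: scaleR_diff_right s_def)
    finally show ?thesis .
  qed
  moreover have "s * ((1 / s) * a - C * norm ((1 / s) *\<^sub>R x - z))
      = a - C * (s * norm ((1 / s) *\<^sub>R x - z))"
    using s by (simp add: algebra_simps)
  ultimately show ?thesis by (simp add: s_def)
next
  case equal
  then show ?thesis using dominated_linear_graph_bound[OF g xa] by simp
next
  case greater
  have "c \<le> C * norm ((1 / t) *\<^sub>R x + z) - (1 / t) * a"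
    using hi[OF dominated_linear_graph_scaleR[OF g xa, of "1 / t"]] by simp
  then have "t * c \<le> t * (C * norm ((1 / t) *\<^sub>R x + z) - (1 / t) * a)"
    using greater by (simp add: mult_left_mono)
  moreover have "t * norm ((1 / t) *\<^sub>R x + z) = norm (x + t *\<^sub>R z)"
  proof -
    have "t * norm ((1 / t) *\<^sub>R x + z) = norm (t *\<^sub>R ((1 / t) *\<^sub>R x + z))" using greater by simp
    also have "t *\<^sub>R ((1 / t) *\<^sub>R x + z) = x + t *\<^sub>R z"
      using greater by (simp add: scaleR_add_right)
    finally show ?thesis .
  qed
  ultimately show ?thesis using greater by (simp add: algebra_simps)
qed

lemma single_valued_line_extension:
  assumes g: "dominated_linear_graph C g" and z: "z \<notin> Domain g"
  shows "single_valued {(x + t *\<^sub>R z, a + t * c) | x a t. (x, a) \<in> g}"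
proof (rule single_valuedI)
  fix x a b
  assume "(x, a) \<in> {(x + t *\<^sub>R z, a + t * c) | x a t. (x, a) \<in> g}"
    and "(x, b) \<in> {(x + t *\<^sub>R z, a + t * c) | x a t. (x, a) \<in> g}"
  then obtain x1 a1 t1 x2 a2 t2 where 1: "x = x1 + t1 *\<^sub>R z" "a = a1 + t1 * c" "(x1, a1) \<in> g"
    and 2: "x = x2 + t2 *\<^sub>R z" "b = a2 + t2 * c" "(x2, a2) \<in> g"
    by blast
  have "t1 = t2"
  proof (rule ccontr)
    assume "t1 \<noteq> t2"
    have "(x1 - x2, a1 - a2) \<in> g"
      using dominated_linear_graph_add[OF g 1(3) dominated_linear_graph_scaleR[OF g 2(3), of "-1"]] by simp
    moreover have "x1 - x2 = (t2 - t1) *\<^sub>R z" using 1(1) 2(1) by (simp add: algebra_simps)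
    then have "z = (1 / (t2 - t1)) *\<^sub>R (x1 - x2)" using \<open>t1 \<noteq> t2\<close> by simp
    ultimately have "z \<in> Domain g"
      using dominated_linear_graph_scaleR[OF g] by (metis Domain.DomainI)
    then show False using z by blast
  qed
  then show "a = b"
    using 1 2 dominated_linear_graph_single_valued[OF g] by auto
qed

lemma dominated_linear_graph_extend:
  fixes g :: "('a::real_normed_vector \<times> real) set"
  assumes C: "C \<ge> 0" and g: "dominated_linear_graph C g" and "(0, 0) \<in> g" and z: "z \<notin> Domain g"
  obtains g' where "dominated_linear_graph C g'" "g \<subseteq> g'" "z \<in> Domain g'"
proof -
  obtain c where lo: "\<And>x a. (x, a) \<in> g \<Longrightarrow> a - C * norm (x - z) \<le> c"
    and hi: "\<And>x a. (x, a) \<in> g \<Longrightarrow> c \<le> C * norm (x + z) - a"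
    using dominated_extension_value[OF C g \<open>(0, 0) \<in> g\<close>] by blast
  define g' where "g' = {(x + t *\<^sub>R z, a + t * c) | x a t. (x, a) \<in> g}"
  have "g \<subseteq> g'" unfolding g'_def by force
  moreover have "z \<in> Domain g'"
    unfolding g'_def using \<open>(0, 0) \<in> g\<close> by (force intro!: DomainI[where b = "0 + 1 * c"])
  moreover have "single_valued g'" unfolding g'_def by (rule single_valued_line_extension[OF g z])
  moreover have "(x + y, a + b) \<in> g'" if xa: "(x, a) \<in> g'" and yb: "(y, b) \<in> g'" for x a y b
  proof -
    obtain x1 a1 t1 x2 a2 t2 where 1: "x = x1 + t1 *\<^sub>R z" "a = a1 + t1 * c" "(x1, a1) \<in> g"
      and 2: "y = x2 + t2 *\<^sub>R z" "b = a2 + t2 * c" "(x2, a2) \<in> g"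
      using xa yb unfolding g'_def by blast
    have "x + y = (x1 + x2) + (t1 + t2) *\<^sub>R z" "a + b = (a1 + a2) + (t1 + t2) * c"
      using 1 2 by (simp_all add: algebra_simps)
    then show ?thesis unfolding g'_def using dominated_linear_graph_add[OF g 1(3) 2(3)] by blast
  qed
  moreover have "(r *\<^sub>R x, r * a) \<in> g'" if xa: "(x, a) \<in> g'" for x a r
  proof -
    obtain x1 a1 t where 1: "x = x1 + t *\<^sub>R z" "a = a1 + t * c" "(x1, a1) \<in> g"
      using xa unfolding g'_def by blast
    have "r *\<^sub>R x = r *\<^sub>R x1 + (r * t) *\<^sub>R z" "r * a = r * a1 + (r * t) * c"
      using 1 by (simp_all add: algebra_simps)
    then show ?thesis unfolding g'_def using dominated_linear_graph_scaleR[OF g 1(3)] by blast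
  qed
  moreover have "a \<le> C * norm x" if "(x, a) \<in> g'" for x a
    using that dominated_extension_bound[OF g lo hi] unfolding g'_def by blast
  ultimately have "dominated_linear_graph C g'"
    unfolding dominated_linear_graph_def by blast
  then show ?thesis using \<open>g \<subseteq> g'\<close> \<open>z \<in> Domain g'\<close> by (rule that)
qed

lemma dominated_linear_graph_Union_chain:
  assumes "Ch \<in> chains {g. dominated_linear_graph C g}"
  shows "dominated_linear_graph C (\<Union>Ch)"
proof -
  have dom: "\<And>g. g \<in> Ch \<Longrightarrow> dominated_linear_graph C g"
    using assms unfolding chains_def by blast
  have two: "\<exists>g\<in>Ch. p \<in> g \<and> q \<in> g" if "p \<in> \<Union>Ch" "q \<in> \<Union>Ch" for p q
    using that assms unfolding chains_def chain_subset_def by blast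
  show ?thesis unfolding dominated_linear_graph_def single_valued_def
  proof (intro conjI allI impI)
    fix x a b assume "(x, a) \<in> \<Union>Ch" "(x, b) \<in> \<Union>Ch"
    then obtain g where "g \<in> Ch" "(x, a) \<in> g" "(x, b) \<in> g" using two by blast
    then show "a = b" using dom dominated_linear_graph_single_valued by blast
  next
    fix x a y b assume "(x, a) \<in> \<Union>Ch" "(y, b) \<in> \<Union>Ch"
    then obtain g where "g \<in> Ch" "(x, a) \<in> g" "(y, b) \<in> g" using two by blast
    then show "(x + y, a + b) \<in> \<Union>Ch" using dom dominated_linear_graph_add by blast
  next
    fix x a r assume "(x, a) \<in> \<Union>Ch"
    then show "(r *\<^sub>R x, r * a) \<in> \<Union>Ch" using dom dominated_linear_graph_scaleR by blast
  next
    fix x a assume "(x, a) \<in> \<Union>Ch"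
    then show "a \<le> C * norm x" using dom dominated_linear_graph_bound by blast
  qed
qed

lemma dominated_linear_graph_total_extension:
  fixes g0 :: "('a::real_normed_vector \<times> real) set"
  assumes C: "C \<ge> 0" and g0: "dominated_linear_graph C g0" and "(0, 0) \<in> g0"
  obtains M where "dominated_linear_graph C M" "g0 \<subseteq> M" "Domain M = UNIV"
proof -
  define A where "A = {g. g0 \<subseteq> g \<and> dominated_linear_graph C g}"
  have "\<forall>Ch\<in>chains A. \<exists>U\<in>A. \<forall>g\<in>Ch. g \<subseteq> U"
  proof
    fix Ch assume Ch: "Ch \<in> chains A"
    show "\<exists>U\<in>A. \<forall>g\<in>Ch. g \<subseteq> U"
    proof (cases "Ch = {}")
      case True
      then show ?thesis using g0 unfolding A_def by blast
    next
      case False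
      have "Ch \<in> chains {g. dominated_linear_graph C g}"
        using Ch unfolding A_def chains_def chain_subset_def by blast
      then have "dominated_linear_graph C (\<Union>Ch)" by (rule dominated_linear_graph_Union_chain)
      moreover have "g0 \<subseteq> \<Union>Ch" using Ch False unfolding A_def chains_def by blast
      ultimately show ?thesis unfolding A_def by blast
    qed
  qed
  then obtain M where "M \<in> A" and max: "\<forall>g\<in>A. M \<subseteq> g \<longrightarrow> g = M"
    using Zorn_Lemma2 by blast
  then have M: "dominated_linear_graph C M" and "g0 \<subseteq> M" unfolding A_def by auto
  have "x \<in> Domain M" for x
  proof (rule ccontr)
    assume "x \<notin> Domain M"
    then obtain g' where "dominated_linear_graph C g'" "M \<subseteq> g'" "x \<in> Domain g'"
      using dominated_linear_graph_extend[OF C M] \<open>(0, 0) \<in> g0\<close> \<open>g0 \<subseteq> M\<close> by blast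
    moreover from this \<open>g0 \<subseteq> M\<close> have "g' \<in> A" unfolding A_def by blast
    ultimately show False using max \<open>x \<notin> Domain M\<close> by blast
  qed
  then show ?thesis using M \<open>g0 \<subseteq> M\<close> that by blast
qed

lemma real_hahn_banach:
  fixes g0 :: "('a::real_normed_vector \<times> real) set"
  assumes C: "C \<ge> 0" and g0: "dominated_linear_graph C g0" and "(0, 0) \<in> g0"
  obtains h where "linear h" "\<And>x. h x \<le> C * norm x" "\<And>x a. (x, a) \<in> g0 \<Longrightarrow> h x = a"
proof -
  obtain M where M: "dominated_linear_graph C M" and "g0 \<subseteq> M" and total: "Domain M = UNIV"
    using dominated_linear_graph_total_extension[OF assms] by blast
  define h where "h x = (THE a. (x, a) \<in> M)" for x
  have h_eq: "h x = a" if "(x, a) \<in> M" for x a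
    unfolding h_def using that dominated_linear_graph_single_valued[OF M] by blast
  have hM: "(x, h x) \<in> M" for x using total h_eq by blast
  show ?thesis
  proof (rule that)
    show "linear h"
    proof (rule linearI)
      show "h (x + y) = h x + h y" for x y using h_eq dominated_linear_graph_add[OF M hM hM] .
      show "h (r *\<^sub>R x) = r *\<^sub>R h x" for r x using h_eq dominated_linear_graph_scaleR[OF M hM] by simp
    qed
    show "h x \<le> C * norm x" for x using dominated_linear_graph_bound[OF M hM] .
    show "h x = a" if "(x, a) \<in> g0" for x a using h_eq that \<open>g0 \<subseteq> M\<close> by blast
  qed
qed

lemma dominated_linear_graph_line:
  fixes M :: "'a::real_normed_vector set"
  assumes M: "subspace M" and u: "u \<notin> M" and d: "0 < d" "d \<le> infdist u M"
  shows "dominated_linear_graph (1 / d) {(m + t *\<^sub>R u, t) | m t. m \<in> M}"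
proof -
  have coeff_unique: "t = t'" if "m \<in> M" "m' \<in> M" "m + t *\<^sub>R u = m' + t' *\<^sub>R u" for m m' t t'
  proof (rule ccontr)
    assume "t \<noteq> t'"
    have "u = (1 / (t - t')) *\<^sub>R ((t - t') *\<^sub>R u)" using \<open>t \<noteq> t'\<close> by simp
    also have "(t - t') *\<^sub>R u = m' - m" using that(3) by (simp add: algebra_simps)
    finally have "u = (1 / (t - t')) *\<^sub>R (m' - m)" .
    then show False using u subspace_scale[OF M subspace_diff[OF M that(2,1)]] by simp
  qed
  have bound: "t \<le> 1 / d * norm (m + t *\<^sub>R u)" if "m \<in> M" for m t
  proof (cases "t = 0")
    case False
    have "- ((1 / t) *\<^sub>R m) \<in> M" using subspace_neg subspace_scale M that by blast
    then have "d \<le> dist u (- ((1 / t) *\<^sub>R m))" using d(2) infdist_le order_trans by blast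
    then have "\<bar>t\<bar> * d \<le> norm (t *\<^sub>R (u + (1 / t) *\<^sub>R m))"
      by (simp add: dist_norm mult_left_mono)
    also have "t *\<^sub>R (u + (1 / t) *\<^sub>R m) = m + t *\<^sub>R u"
      using False by (simp add: scaleR_add_right)
    finally have "t * d \<le> norm (m + t *\<^sub>R u)"
      by (meson abs_ge_self d(1) less_imp_le mult_right_mono order_trans)
    then show ?thesis using d(1) by (simp add: field_simps)
  qed (use d in simp)
  show ?thesis unfolding dominated_linear_graph_def single_valued_def
  proof (intro conjI allI impI)
    fix x a y b
    assume "(x, a) \<in> {(m + t *\<^sub>R u, t) | m t. m \<in> M}" "(y, b) \<in> {(m + t *\<^sub>R u, t) | m t. m \<in> M}"
    then obtain m m' where "x = m + a *\<^sub>R u" "y = m' + b *\<^sub>R u" "m \<in> M" "m' \<in> M" by blast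
    moreover have "x + y = (m + m') + (a + b) *\<^sub>R u" using calculation by (simp add: algebra_simps)
    ultimately show "(x + y, a + b) \<in> {(m + t *\<^sub>R u, t) | m t. m \<in> M}"
      using subspace_add[OF M] by blast
  next
    fix x a r assume "(x, a) \<in> {(m + t *\<^sub>R u, t) | m t. m \<in> M}"
    then obtain m where "x = m + a *\<^sub>R u" "m \<in> M" by blast
    moreover have "r *\<^sub>R x = r *\<^sub>R m + (r * a) *\<^sub>R u" using calculation by (simp add: algebra_simps)
    ultimately show "(r *\<^sub>R x, r * a) \<in> {(m + t *\<^sub>R u, t) | m t. m \<in> M}"
      using subspace_scale[OF M] by blast
  qed (use coeff_unique bound in blast)+
qed

lemma exists_bounded_linear_separating:
  fixes M :: "'a::real_normed_vector set"
  assumes "closed M" and M: "subspace M" and u: "u \<notin> M"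
  obtains h :: "'a \<Rightarrow> real" where "bounded_linear h" "\<forall>m\<in>M. h m = 0" "h u = 1"
proof -
  define d where "d = infdist u M"
  have "d > 0" unfolding d_def
    using infdist_pos_not_in_closed[OF \<open>closed M\<close> _ u] subspace_0[OF M] by blast
  define g0 where "g0 = {(m + t *\<^sub>R u, t) | m t. m \<in> M}"
  have g0: "dominated_linear_graph (1 / d) g0"
    unfolding g0_def by (rule dominated_linear_graph_line[OF M u \<open>d > 0\<close>]) (simp add: d_def)
  have in_g0: "(m + t *\<^sub>R u, t) \<in> g0" if "m \<in> M" for m t unfolding g0_def using that by blast
  obtain h where h: "linear h" and h_le: "\<And>x. h x \<le> 1 / d * norm x"
    and h_g0: "\<And>x a. (x, a) \<in> g0 \<Longrightarrow> h x = a"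
    using real_hahn_banach[of "1 / d" g0] g0 in_g0[OF subspace_0[OF M], of 0] \<open>d > 0\<close> by auto
  have "bounded_linear h"
  proof (rule bounded_linear_intro[where K = "1 / d"])
    show "norm (h x) \<le> norm x * (1 / d)" for x
      using h_le[of x] h_le[of "- x"] linear_neg[OF h, of x] by (simp add: abs_le_iff mult.commute)
  qed (simp_all add: linear_add[OF h] linear_scale[OF h])
  moreover have "\<forall>m\<in>M. h m = 0" using h_g0 in_g0[of _ 0] by simp
  moreover have "h u = 1" using h_g0 in_g0[OF subspace_0[OF M], of 1] by simp
  ultimately show ?thesis by (rule that)
qed

section \<open>Complex scalars, subspaces and functionals\<close>

lemma cdual_add: "cdual cm f \<Longrightarrow> f (x + y) = f x + f y"
  and cdual_cm: "cdual cm f \<Longrightarrow> f (cm c x) = c * f x"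
  by (simp_all add: cdual_def)

lemma cdual_diff: "cdual cm f \<Longrightarrow> f (x - y) = f x - f y"
  using cdual_add[of cm f "x - y" y] by simp

locale complex_banach =
  fixes cm :: "complex \<Rightarrow> 'a::banach \<Rightarrow> 'a"
  assumes cbanach: "cbanach cm"
begin

lemma cm_add_left: "cm (c + d) x = cm c x + cm d x"
  and cm_add_right: "cm c (x + y) = cm c x + cm c y"
  and cm_mult: "cm (c * d) x = cm c (cm d x)"
  and cm_of_real: "cm (complex_of_real r) x = r *\<^sub>R x"
  and norm_cm: "norm (cm c x) = cmod c * norm x"
  using cbanach by (simp_all add: cbanach_def)

lemma cm_one [simp]: "cm 1 x = x"
  using cm_of_real[of 1 x] by simp

lemma cm_scaleR: "cm c (r *\<^sub>R x) = r *\<^sub>R cm c x"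
  by (metis cm_mult cm_of_real mult.commute)

lemma bounded_linear_cm: "bounded_linear (cm c)"
  by (rule bounded_linear_intro[where K = "cmod c"]) (auto simp: cm_add_right cm_scaleR norm_cm)

lemma bounded_linear_cm_left: "bounded_linear (\<lambda>c. cm c p)"
proof (rule bounded_linear_intro[where K = "norm p"])
  show "cm (r *\<^sub>R c) p = r *\<^sub>R cm c p" for r c
    by (simp add: scaleR_conv_of_real cm_mult cm_of_real)
qed (simp_all add: cm_add_left norm_cm)

lemma cm_zero_right [simp]: "cm c 0 = 0"
  and cm_diff_right: "cm c (x - y) = cm c x - cm c y"
  using bounded_linear_cm[of c] by (simp_all add: linear_simps)

lemma cm_zero_left [simp]: "cm 0 x = 0"
  and cm_diff_left: "cm (c - d) x = cm c x - cm d x"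
  using linear_0[OF bounded_linear.linear[OF bounded_linear_cm_left[of x]]]
    linear_diff[OF bounded_linear.linear[OF bounded_linear_cm_left[of x]]] by simp_all

lemma cm_inverse_cancel: "c \<noteq> 0 \<Longrightarrow> cm (inverse c) (cm c x) = x"
  by (metis cm_mult cm_one left_inverse)

lemma cm_decompose: "cm c x = Re c *\<^sub>R x + Im c *\<^sub>R cm \<i> x"
proof -
  have "c = complex_of_real (Re c) + complex_of_real (Im c) * \<i>" by (simp add: complex_eq_iff)
  then show ?thesis by (metis cm_add_left cm_mult cm_of_real)
qed

lemma csubspaceD:
  assumes "csubspace cm E"
  shows csubspace_0: "0 \<in> E"
    and csubspace_add: "x \<in> E \<Longrightarrow> y \<in> E \<Longrightarrow> x + y \<in> E"
    and csubspace_cm: "x \<in> E \<Longrightarrow> cm c x \<in> E"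
  using assms by (simp_all add: csubspace_def)

lemma csubspace_imp_subspace: "csubspace cm E \<Longrightarrow> subspace E"
  unfolding subspace_def by (metis csubspaceD cm_of_real)

lemma bounded_linear_cdual:
  assumes "cdual cm f"
  shows "bounded_linear f"
proof -
  obtain K where K: "\<And>x. cmod (f x) \<le> K * norm x" using assms by (auto simp: cdual_def)
  show ?thesis
  proof (rule bounded_linear_intro[where K = K])
    show "f (r *\<^sub>R x) = r *\<^sub>R f x" for r x
      using cdual_cm[OF assms, of "complex_of_real r" x] by (simp add: cm_of_real scaleR_conv_of_real)
  qed (use cdual_add[OF assms] K in \<open>simp_all add: mult.commute\<close>)
qed

text \<open>A real functional h is the real part of the complex functional x \<mapsto> h x - i h (i x).\<close>

lemma cdual_complexification:
  assumes h: "bounded_linear h"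
  shows "cdual cm (\<lambda>x. Complex (h x) (- h (cm \<i> x)))"
  unfolding cdual_def
proof (intro conjI allI)
  interpret h: bounded_linear h by (rule h)
  show "Complex (h (x + y)) (- h (cm \<i> (x + y))) = Complex (h x) (- h (cm \<i> x)) + Complex (h y) (- h (cm \<i> y))"
    for x y by (simp add: h.add cm_add_right complex_eq_iff)
  show "Complex (h (cm c x)) (- h (cm \<i> (cm c x))) = c * Complex (h x) (- h (cm \<i> x))" for c x
  proof -
    have 1: "h (cm c x) = Re c * h x + Im c * h (cm \<i> x)"
      by (subst cm_decompose) (simp add: h.add h.scaleR)
    have "cm \<i> (cm c x) = cm (\<i> * c) x" by (simp add: cm_mult)
    then have 2: "h (cm \<i> (cm c x)) = - Im c * h x + Re c * h (cm \<i> x)"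
      by (simp only: cm_decompose[of "\<i> * c" x]) (simp add: h.add h.diff h.scaleR)
    show ?thesis using 1 2 by (simp add: complex_eq_iff algebra_simps)
  qed
  obtain K where K: "\<And>x. norm (h x) \<le> norm x * K" using h.bounded by blast
  show "\<exists>K. \<forall>x. cmod (Complex (h x) (- h (cm \<i> x))) \<le> K * norm x"
  proof (intro exI allI)
    fix x
    have "cmod (Complex (h x) (- h (cm \<i> x))) \<le> \<bar>h x\<bar> + \<bar>h (cm \<i> x)\<bar>"
      using cmod_le[of "Complex (h x) (- h (cm \<i> x))"] by simp
    also have "\<dots> \<le> 2 * K * norm x" using K[of x] K[of "cm \<i> x"] by (simp add: norm_cm algebra_simps)
    finally show "cmod (Complex (h x) (- h (cm \<i> x))) \<le> 2 * K * norm x" .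
  qed
qed

lemma exists_cdual_separating:
  assumes "closed M" and M: "csubspace cm M" and u: "u \<notin> M"
  obtains f where "cdual cm f" "\<forall>m\<in>M. f m = 0" "f u = 1"
proof -
  obtain h :: "'a \<Rightarrow> real" where h: "bounded_linear h" and hM: "\<forall>m\<in>M. h m = 0" and hu: "h u = 1"
    using exists_bounded_linear_separating[OF \<open>closed M\<close> csubspace_imp_subspace[OF M] u] by blast
  define f0 where "f0 = (\<lambda>x. Complex (h x) (- h (cm \<i> x)))"
  have f0: "cdual cm f0" unfolding f0_def by (rule cdual_complexification[OF h])
  have "f0 u \<noteq> 0" using hu by (simp add: f0_def complex_eq_iff)
  show ?thesis
  proof (rule that[of "\<lambda>x. f0 x / f0 u"])
    obtain K where K: "\<And>x. cmod (f0 x) \<le> K * norm x" using f0 by (auto simp: cdual_def)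
    show "cdual cm (\<lambda>x. f0 x / f0 u)"
      unfolding cdual_def
    proof (intro conjI allI exI)
      show "f0 (x + y) / f0 u = f0 x / f0 u + f0 y / f0 u" for x y
        by (simp add: cdual_add[OF f0] add_divide_distrib)
      show "f0 (cm c x) / f0 u = c * (f0 x / f0 u)" for c x by (simp add: cdual_cm[OF f0])
      show "cmod (f0 x / f0 u) \<le> K / cmod (f0 u) * norm x" for x
        using K[of x] by (simp add: norm_divide divide_right_mono)
    qed
    show "\<forall>m\<in>M. f0 m / f0 u = 0"
      using hM csubspace_cm[OF M] by (simp add: f0_def Complex_eq_0)
  qed (use \<open>f0 u \<noteq> 0\<close> in simp)
qed

section \<open>Complex spans\<close>

lemma cspan_superset: "A \<subseteq> cspan cm A"
  by (auto simp: cspan_def)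

lemma csubspace_cspan: "csubspace cm (cspan cm A)"
  by (auto simp: cspan_def csubspace_def)

lemma cspan_minimal: "csubspace cm E \<Longrightarrow> A \<subseteq> E \<Longrightarrow> cspan cm A \<subseteq> E"
  by (auto simp: cspan_def)

lemma cspan_mono: "A \<subseteq> B \<Longrightarrow> cspan cm A \<subseteq> cspan cm B"
  by (meson csubspace_cspan cspan_minimal cspan_superset order_trans)

lemma cspan_eq_self: "csubspace cm E \<Longrightarrow> cspan cm E = E"
  using cspan_minimal cspan_superset by blast

lemma csubspace_closure:
  assumes S: "csubspace cm S"
  shows "csubspace cm (closure S)"
  unfolding csubspace_def
proof (intro conjI ballI allI)
  show "0 \<in> closure S" using csubspace_0[OF S] closure_subset by blast
  fix x y c assume x: "x \<in> closure S"
  then obtain f where f: "\<And>n. f n \<in> S" "f \<longlonglongrightarrow> x" by (meson closure_sequential)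
  have "(\<lambda>n. cm c (f n)) \<longlonglongrightarrow> cm c x" by (rule bounded_linear.tendsto[OF bounded_linear_cm f(2)])
  then show "cm c x \<in> closure S"
    unfolding closure_sequential by (intro exI[of _ "\<lambda>n. cm c (f n)"]) (simp add: f(1) csubspace_cm[OF S])
  assume "y \<in> closure S"
  then obtain g where g: "\<And>n. g n \<in> S" "g \<longlonglongrightarrow> y" by (meson closure_sequential)
  show "x + y \<in> closure S"
    unfolding closure_sequential using tendsto_add[OF f(2) g(2)]
    by (intro exI[of _ "\<lambda>n. f n + g n"]) (simp add: f(1) g(1) csubspace_add[OF S])
qed

lemma csubspace_cclspan: "csubspace cm (cclspan cm A)"
  unfolding cclspan_def by (rule csubspace_closure[OF csubspace_cspan])

lemma cclspan_superset: "A \<subseteq> cclspan cm A"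
  unfolding cclspan_def using cspan_superset closure_subset by blast

lemma cclspan_minimal: "closed E \<Longrightarrow> csubspace cm E \<Longrightarrow> A \<subseteq> E \<Longrightarrow> cclspan cm A \<subseteq> E"
  unfolding cclspan_def by (meson closure_minimal cspan_minimal)

lemma cspan_insert_csubspace:
  assumes L: "csubspace cm L"
  shows "cspan cm (insert p L) = {l + cm c p | l c. l \<in> L}" (is "_ = ?R")
proof
  have "csubspace cm ?R"
    unfolding csubspace_def
  proof (intro conjI ballI allI)
    have "0 = 0 + cm 0 p" by simp
    then show "0 \<in> ?R" using csubspace_0[OF L] by blast
    fix x y assume "x \<in> ?R" "y \<in> ?R"
    then obtain l c l' c' where "x = l + cm c p" "y = l' + cm c' p" "l \<in> L" "l' \<in> L" by blast
    moreover have "x + y = (l + l') + cm (c + c') p" using calculation by (simp add: cm_add_left)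
    ultimately show "x + y \<in> ?R" using csubspace_add[OF L] by blast
  next
    fix d x assume "x \<in> ?R"
    then obtain l c where "x = l + cm c p" "l \<in> L" by blast
    moreover have "cm d x = cm d l + cm (d * c) p" using calculation by (simp add: cm_add_right cm_mult)
    ultimately show "cm d x \<in> ?R" using csubspace_cm[OF L] by blast
  qed
  moreover have "insert p L \<subseteq> ?R"
  proof -
    have "p = 0 + cm 1 p" by simp
    moreover have "l = l + cm 0 p" for l by simp
    ultimately show ?thesis using csubspace_0[OF L] by blast
  qed
  ultimately show "cspan cm (insert p L) \<subseteq> ?R" by (rule cspan_minimal)
  show "?R \<subseteq> cspan cm (insert p L)"
    using cspan_superset[of "insert p L"] csubspace_add[OF csubspace_cspan] csubspace_cm[OF csubspace_cspan]
    by blast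
qed

lemma cspan_insert_cspan: "cspan cm (insert p A) = cspan cm (insert p (cspan cm A))"
proof
  show "cspan cm (insert p A) \<subseteq> cspan cm (insert p (cspan cm A))"
    using cspan_mono[of "insert p A" "insert p (cspan cm A)"] cspan_superset[of A] by blast
  show "cspan cm (insert p (cspan cm A)) \<subseteq> cspan cm (insert p A)"
    using cspan_mono[of A "insert p A"] cspan_superset[of "insert p A"]
    by (intro cspan_minimal[OF csubspace_cspan]) auto
qed

lemma cspan_Un_csubspace_subset:
  assumes K: "csubspace cm K"
  shows "cspan cm (K \<union> Q) \<subseteq> {k + w | k w. k \<in> K \<and> w \<in> cspan cm Q}" (is "_ \<subseteq> ?R")
proof (rule cspan_minimal)
  show "csubspace cm ?R"
    unfolding csubspace_def
  proof (intro conjI ballI allI)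
    show "0 \<in> ?R" using csubspace_0[OF K] csubspace_0[OF csubspace_cspan] by force
    fix x y assume "x \<in> ?R" "y \<in> ?R"
    then obtain k w k' w' where "x = k + w" "y = k' + w'" "k \<in> K" "k' \<in> K" "w \<in> cspan cm Q" "w' \<in> cspan cm Q"
      by blast
    moreover have "x + y = (k + k') + (w + w')" using calculation by (simp add: algebra_simps)
    ultimately show "x + y \<in> ?R" using csubspace_add[OF K] csubspace_add[OF csubspace_cspan] by blast
  next
    fix c x assume "x \<in> ?R"
    then obtain k w where "x = k + w" "k \<in> K" "w \<in> cspan cm Q" by blast
    then show "cm c x \<in> ?R" using csubspace_cm[OF K] csubspace_cm[OF csubspace_cspan] cm_add_right by blast
  qed
  have "k = k + 0" "w = 0 + w" for k w :: 'a by simp_all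
  then show "K \<union> Q \<subseteq> ?R"
    using csubspace_0[OF K] csubspace_0[OF csubspace_cspan] cspan_superset[of Q] by blast
qed

lemma mem_cspan_insert:
  "v \<in> cspan cm (insert p A) \<longleftrightarrow> (\<exists>l c. l \<in> cspan cm A \<and> v = l + cm c p)"
  unfolding cspan_insert_cspan[of p A] cspan_insert_csubspace[OF csubspace_cspan] by blast

lemma cm_coeff_unique:
  assumes L: "csubspace cm L" and p: "p \<notin> L" and "l \<in> L" "l' \<in> L"
    and eq: "l + cm c p = l' + cm c' p"
  shows "c = c'"
proof (rule ccontr)
  assume "c \<noteq> c'"
  have "cm (c - c') p = l' - l" using eq by (simp add: cm_diff_left algebra_simps)
  then have "cm (c - c') p \<in> L"
    using \<open>l \<in> L\<close> \<open>l' \<in> L\<close> subspace_diff[OF csubspace_imp_subspace[OF L]] by simp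
  then have "cm (inverse (c - c')) (cm (c - c') p) \<in> L" by (rule csubspace_cm[OF L])
  then show False using p cm_inverse_cancel \<open>c \<noteq> c'\<close> by simp
qed

text \<open>For f vanishing on L with f(p) = 1, the subspace L + \<complex>p is the preimage of L under the
  continuous map x \<mapsto> x - f(x) p.\<close>

lemma closed_cspan_insert:
  assumes "closed L" and L: "csubspace cm L"
  shows "closed (cspan cm (insert p L))"
proof (cases "p \<in> L")
  case True
  then show ?thesis using \<open>closed L\<close> cspan_eq_self[OF L] by (simp add: insert_absorb)
next
  case False
  obtain f where f: "cdual cm f" and fL: "\<forall>m\<in>L. f m = 0" and fp: "f p = 1"
    using exists_cdual_separating[OF \<open>closed L\<close> L False] by blast
  have "cspan cm (insert p L) = (\<lambda>x. x - cm (f x) p) -` L"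
  proof (intro equalityI subsetI)
    fix x assume "x \<in> cspan cm (insert p L)"
    then obtain l c where "l \<in> L" "x = l + cm c p" unfolding cspan_insert_csubspace[OF L] by blast
    moreover have "f x = c" using calculation fL fp cdual_add[OF f] cdual_cm[OF f] by simp
    ultimately show "x \<in> (\<lambda>x. x - cm (f x) p) -` L" by simp
  next
    fix x assume "x \<in> (\<lambda>x. x - cm (f x) p) -` L"
    then have "(x - cm (f x) p) + cm (f x) p \<in> cspan cm (insert p L)"
      unfolding cspan_insert_csubspace[OF L] by blast
    then show "x \<in> cspan cm (insert p L)" by simp
  qed
  moreover have "bounded_linear (\<lambda>x. x - cm (f x) p)"
    using bounded_linear_compose[OF bounded_linear_cm_left bounded_linear_cdual[OF f]]
    by (intro bounded_linear_sub bounded_linear_ident) (simp add: o_def)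
  ultimately show ?thesis
    using continuous_closed_vimage[OF \<open>closed L\<close> linear_continuous_at] by simp
qed

lemma closed_cspan_Un_finite:
  assumes "finite Q" "closed G" "csubspace cm G"
  shows "closed (cspan cm (G \<union> Q))"
  using assms(1)
proof (induction Q)
  case empty
  then show ?case using cspan_eq_self[OF assms(3)] assms(2) by simp
next
  case (insert p Q)
  have "G \<union> insert p Q = insert p (G \<union> Q)" by blast
  then show ?case
    using cspan_insert_cspan[of p "G \<union> Q"] closed_cspan_insert[OF insert.IH csubspace_cspan] by metis
qed

text \<open>In the decompositions v = l + c p with l \<in> span (F \<union> Q), the coefficient c does not depend
  on F once p \<notin> span (F0 \<union> Q) for some F0, by uniqueness of coefficients in the larger of F, F0.\<close>

lemma cspan_chain_common_coeff:
  assumes chain: "\<And>F F'. F \<in> C \<Longrightarrow> F' \<in> C \<Longrightarrow> F \<subseteq> F' \<or> F' \<subseteq> F"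
    and v: "\<forall>F\<in>C. v \<in> cspan cm (insert p (F \<union> Q))"
  obtains c where "\<forall>F\<in>C. v - cm c p \<in> cspan cm (F \<union> Q)"
proof -
  have decomp: "\<exists>l c. l \<in> cspan cm (F \<union> Q) \<and> v = l + cm c p" if "F \<in> C" for F
    using v that mem_cspan_insert by blast
  show ?thesis
  proof (cases "\<exists>F0\<in>C. p \<notin> cspan cm (F0 \<union> Q)")
    case True
    then obtain F0 l0 c0 where F0: "F0 \<in> C" "p \<notin> cspan cm (F0 \<union> Q)"
      and l0: "l0 \<in> cspan cm (F0 \<union> Q)" "v = l0 + cm c0 p"
      using decomp by blast
    have "v - cm c0 p \<in> cspan cm (F \<union> Q)" if F: "F \<in> C" for F
    proof (cases "F0 \<subseteq> F")
      case True
      then show ?thesis using l0 cspan_mono[of "F0 \<union> Q" "F \<union> Q"] by auto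
    next
      case False
      then have "F \<union> Q \<subseteq> F0 \<union> Q" using chain[OF F F0(1)] by blast
      obtain l c where l: "l \<in> cspan cm (F \<union> Q)" "v = l + cm c p" using decomp[OF F] by blast
      with \<open>F \<union> Q \<subseteq> F0 \<union> Q\<close> have "l \<in> cspan cm (F0 \<union> Q)" using cspan_mono by blast
      then have "c = c0" using cm_coeff_unique[OF csubspace_cspan F0(2) _ l0(1)] l(2) l0(2) by simp
      then show ?thesis using l by simp
    qed
    then show ?thesis by (rule that[rule_format])
  next
    case False
    have "v \<in> cspan cm (F \<union> Q)" if F: "F \<in> C" for F
    proof -
      obtain l c where "l \<in> cspan cm (F \<union> Q)" "v = l + cm c p" using decomp[OF F] by blast
      then show ?thesis
        using False F csubspace_add[OF csubspace_cspan] csubspace_cm[OF csubspace_cspan] by blast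
    qed
    then show ?thesis using that[of 0] by simp
  qed
qed

lemma cspan_Inter_chain_Un_finite:
  assumes "finite Q" and chain: "\<And>F F'. F \<in> C \<Longrightarrow> F' \<in> C \<Longrightarrow> F \<subseteq> F' \<or> F' \<subseteq> F"
    and csub: "\<And>F. F \<in> C \<Longrightarrow> csubspace cm F"
    and "\<forall>F\<in>C. v \<in> cspan cm (F \<union> Q)"
  shows "v \<in> cspan cm (\<Inter>C \<union> Q)"
  using assms(1,4)
proof (induction Q arbitrary: v)
  case empty
  then have "v \<in> \<Inter>C" using cspan_eq_self[OF csub] by auto
  then show ?case using cspan_superset[of "\<Inter>C"] by auto
next
  case (insert p Q)
  have ins: "F \<union> insert p Q = insert p (F \<union> Q)" for F by blast
  obtain c where "\<forall>F\<in>C. v - cm c p \<in> cspan cm (F \<union> Q)"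
    using cspan_chain_common_coeff[OF chain] insert.prems unfolding ins by blast
  then have "v - cm c p \<in> cspan cm (\<Inter>C \<union> Q)" by (rule insert.IH)
  then show ?case unfolding ins mem_cspan_insert by (intro exI[of _ "v - cm c p"] exI[of _ c]) simp
qed

end

section \<open>Operators and the weak operator topology\<close>

lemma bop_bounded_linear: "bop cm T \<Longrightarrow> bounded_linear T"
  and bop_cm: "bop cm T \<Longrightarrow> T (cm c x) = cm c (T x)"
  by (simp_all add: bop_def)

lemma bop_add: "bop cm T \<Longrightarrow> T (x + y) = T x + T y"
  and bop_zero: "bop cm T \<Longrightarrow> T 0 = 0"
  by (simp_all add: bop_bounded_linear bounded_linear.linear linear_add linear_0)

lemma (in complex_banach) cspan_bop_bound:
  assumes "w \<in> cspan cm Q"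
  obtains B where "B \<ge> 0"
    "\<And>L \<eta>. bop cm L \<Longrightarrow> 0 \<le> \<eta> \<Longrightarrow> \<forall>q\<in>Q. norm (L q) \<le> \<eta> \<Longrightarrow> norm (L w) \<le> B * \<eta>"
proof -
  define bounded_by where
    "bounded_by B w \<longleftrightarrow> (\<forall>L \<eta>. bop cm L \<longrightarrow> 0 \<le> \<eta> \<longrightarrow> (\<forall>q\<in>Q. norm (L q) \<le> \<eta>) \<longrightarrow> norm (L w) \<le> B * \<eta>)"
    for B w
  have "csubspace cm {w. \<exists>B\<ge>0. bounded_by B w}"
    unfolding csubspace_def
  proof (intro conjI ballI allI; clarsimp)
    show "\<exists>B\<ge>0. bounded_by B 0" unfolding bounded_by_def by (auto simp: bop_zero)
  next
    fix x y B1 B2 assume B: "0 \<le> B1" "bounded_by B1 x" "0 \<le> B2" "bounded_by B2 y"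
    have "norm (L (x + y)) \<le> (B1 + B2) * \<eta>"
      if "bop cm L" "0 \<le> \<eta>" "\<forall>q\<in>Q. norm (L q) \<le> \<eta>" for L \<eta>
    proof -
      have "norm (L (x + y)) \<le> norm (L x) + norm (L y)"
        using bop_add[OF that(1)] norm_triangle_ineq by simp
      also have "\<dots> \<le> B1 * \<eta> + B2 * \<eta>" using B that unfolding bounded_by_def by (meson add_mono)
      finally show ?thesis by (simp add: algebra_simps)
    qed
    then show "\<exists>B\<ge>0. bounded_by B (x + y)" using B unfolding bounded_by_def by (intro exI[of _ "B1 + B2"]) auto
  next
    fix c x B assume B: "0 \<le> B" "bounded_by B x"
    have "norm (L (cm c x)) \<le> (cmod c * B) * \<eta>"
      if "bop cm L" "0 \<le> \<eta>" "\<forall>q\<in>Q. norm (L q) \<le> \<eta>" for L \<eta>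
      using B that unfolding bounded_by_def
      by (simp add: bop_cm[OF that(1)] norm_cm mult.assoc mult_left_mono)
    then show "\<exists>B\<ge>0. bounded_by B (cm c x)" using B unfolding bounded_by_def
      by (intro exI[of _ "cmod c * B"]) auto
  qed
  moreover have "Q \<subseteq> {w. \<exists>B\<ge>0. bounded_by B w}"
    unfolding bounded_by_def by (force intro: exI[of _ 1])
  ultimately have "\<exists>B\<ge>0. bounded_by B w" using cspan_minimal assms by blast
  then show ?thesis using that unfolding bounded_by_def by blast
qed

lemma cdual_uniform_bound:
  assumes "finite F" "\<forall>(x, \<phi>)\<in>F. cdual cm \<phi>"
  shows "\<exists>K>0. \<forall>(x, \<phi>)\<in>F. \<forall>y. cmod (\<phi> y) \<le> K * norm y"
  using assms
proof (induction F)
  case empty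
  show ?case by (auto intro: exI[of _ 1])
next
  case (insert p F)
  obtain K1 where K1: "K1 > 0" "\<forall>(x, \<phi>)\<in>F. \<forall>y. cmod (\<phi> y) \<le> K1 * norm y"
    using insert.IH insert.prems by blast
  obtain K2 where K2: "\<forall>y. cmod (snd p y) \<le> K2 * norm y"
    using insert.prems unfolding cdual_def by (cases p) auto
  have "cmod (\<phi> y) \<le> max K1 \<bar>K2\<bar> * norm y" if "(x, \<phi>) \<in> insert p F" for x \<phi> y
  proof (cases "(x, \<phi>) = p")
    case True
    have "cmod (\<phi> y) \<le> K2 * norm y" using K2 True by auto
    also have "\<dots> \<le> max K1 \<bar>K2\<bar> * norm y" by (intro mult_right_mono) auto
    finally show ?thesis .
  next
    case False
    then have "cmod (\<phi> y) \<le> K1 * norm y" using K1(2) that by auto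
    also have "\<dots> \<le> max K1 \<bar>K2\<bar> * norm y" by (intro mult_right_mono) auto
    finally show ?thesis .
  qed
  then show ?case using K1(1) by (intro exI[of _ "max K1 \<bar>K2\<bar>"]) auto
qed

lemma wot_closed_mem_if_strong_approx:
  assumes "wot_closed cm J" "bop cm T"
    and approx: "\<And>P \<delta>. finite P \<Longrightarrow> 0 < \<delta> \<Longrightarrow> \<exists>S\<in>J. \<forall>x\<in>P. norm (S x - T x) < \<delta>"
  shows "T \<in> J"
proof -
  have "\<exists>S\<in>J. \<forall>(x, \<phi>)\<in>F. cmod (\<phi> (S x) - \<phi> (T x)) < e"
    if F: "finite F" "\<forall>(x, \<phi>)\<in>F. cdual cm \<phi>" and "e > 0" for F :: "('a \<times> ('a \<Rightarrow> complex)) set" and e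
  proof -
    obtain K where K: "K > 0" "\<forall>(x, \<phi>)\<in>F. \<forall>y. cmod (\<phi> y) \<le> K * norm y"
      using cdual_uniform_bound[OF F] by blast
    have "finite (fst ` F)" "0 < e / K" using F(1) \<open>e > 0\<close> K(1) by simp_all
    then obtain S where S: "S \<in> J" "\<forall>x\<in>fst ` F. norm (S x - T x) < e / K"
      using approx by blast
    have "cmod (\<phi> (S x) - \<phi> (T x)) < e" if xF: "(x, \<phi>) \<in> F" for x \<phi>
    proof -
      have "cmod (\<phi> (S x) - \<phi> (T x)) = cmod (\<phi> (S x - T x))"
        using cdual_diff[of cm \<phi>] F(2) xF by auto
      also have "\<dots> \<le> K * norm (S x - T x)" using K(2) xF by auto
      also have "\<dots> < K * (e / K)"
        using S(2) xF K(1) by (intro mult_strict_left_mono) force+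
      finally show ?thesis using K(1) by simp
    qed
    then have "\<forall>(x, \<phi>)\<in>F. cmod (\<phi> (S x) - \<phi> (T x)) < e" by auto
    then show ?thesis using S(1) by (rule bexI)
  qed
  with assms(1,2) show ?thesis unfolding wot_closed_def by auto
qed

section \<open>Nests and bimodules\<close>

locale nest_bimodule = complex_banach cm for cm :: "complex \<Rightarrow> 'a::banach \<Rightarrow> 'a" +
  fixes N :: "'a set set" and J :: "('a \<Rightarrow> 'a) set"
  assumes nest: "nest cm N" and bimodule: "bimodule cm N J"
begin

lemma nest_csubspace: "E \<in> N \<Longrightarrow> csubspace cm E"
  and nest_closed: "E \<in> N \<Longrightarrow> closed E"
  and nest_chain: "E \<in> N \<Longrightarrow> F \<in> N \<Longrightarrow> E \<subseteq> F \<or> F \<subseteq> E"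
  and nest_Inter: "S \<subseteq> N \<Longrightarrow> \<Inter>S \<in> N"
  and nest_cclspan_Union: "S \<subseteq> N \<Longrightarrow> cclspan cm (\<Union>S) \<in> N"
  using nest by (simp_all add: nest_def)

lemma J_bop: "T \<in> J \<Longrightarrow> bop cm T"
  and J_zero: "(\<lambda>x. 0) \<in> J"
  and J_add: "S \<in> J \<Longrightarrow> T \<in> J \<Longrightarrow> (\<lambda>x. S x + T x) \<in> J"
  and J_cm: "T \<in> J \<Longrightarrow> (\<lambda>x. cm c (T x)) \<in> J"
  and J_comp_nest_alg: "A \<in> nest_alg cm N \<Longrightarrow> T \<in> J \<Longrightarrow> T \<circ> A \<in> J"
  using bimodule by (simp_all add: bimodule_def)

definition nest_succ :: "'a set \<Rightarrow> 'a set" where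
  "nest_succ G = \<Inter>{F \<in> N. \<not> F \<subseteq> G}"

lemma nest_succ_mem: "nest_succ G \<in> N"
  unfolding nest_succ_def by (rule nest_Inter) auto

lemma nest_succ_superset: "G \<in> N \<Longrightarrow> G \<subseteq> nest_succ G"
  unfolding nest_succ_def using nest_chain by blast

lemma nest_succ_least: "F \<in> N \<Longrightarrow> \<not> F \<subseteq> G \<Longrightarrow> nest_succ G \<subseteq> F"
  unfolding nest_succ_def by blast

text \<open>Every element of the nest either lies in G, where f vanishes, or contains nest_succ G \<ni> y.\<close>

lemma rank_one_mem_nest_alg:
  assumes f: "cdual cm f" "\<forall>x\<in>G. f x = 0" and y: "y \<in> nest_succ G"
  shows "(\<lambda>x. cm (f x) y) \<in> nest_alg cm N"
proof -
  have "bop cm (\<lambda>x. cm (f x) y)"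
    unfolding bop_def
    using bounded_linear_compose[OF bounded_linear_cm_left bounded_linear_cdual[OF f(1)]]
    by (simp add: o_def cdual_cm[OF f(1)] cm_mult)
  moreover have "(\<lambda>x. cm (f x) y) ` E \<subseteq> E" if E: "E \<in> N" for E
  proof (cases "E \<subseteq> G")
    case True
    then show ?thesis using f(2) csubspace_0[OF nest_csubspace[OF E]] by auto
  next
    case False
    then have "y \<in> E" using nest_succ_least[OF E] y by blast
    then show ?thesis using csubspace_cm[OF nest_csubspace[OF E]] by auto
  qed
  ultimately show ?thesis unfolding nest_alg_def by blast
qed

definition vanishing_orbit :: "'a set \<Rightarrow> 'a \<Rightarrow> 'a set" where
  "vanishing_orbit Q v = {S v | S. S \<in> J \<and> (\<forall>q\<in>Q. S q = 0)}"

lemma csubspace_vanishing_orbit: "csubspace cm (vanishing_orbit Q v)"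
  unfolding csubspace_def vanishing_orbit_def
proof (intro conjI ballI allI)
  show "0 \<in> {S v | S. S \<in> J \<and> (\<forall>q\<in>Q. S q = 0)}" using J_zero by force
  fix x y c
  assume "x \<in> {S v | S. S \<in> J \<and> (\<forall>q\<in>Q. S q = 0)}"
  then obtain S where S: "x = S v" "S \<in> J" "\<forall>q\<in>Q. S q = 0" by blast
  show "cm c x \<in> {S v | S. S \<in> J \<and> (\<forall>q\<in>Q. S q = 0)}"
    using S J_cm[OF S(2), of c] by force
  assume "y \<in> {S v | S. S \<in> J \<and> (\<forall>q\<in>Q. S q = 0)}"
  then obtain S' where S': "y = S' v" "S' \<in> J" "\<forall>q\<in>Q. S' q = 0" by blast
  show "x + y \<in> {S v | S. S \<in> J \<and> (\<forall>q\<in>Q. S q = 0)}"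
    using S S' J_add[OF S(2) S'(2)] by force
qed

lemma image_nest_succ_subset_vanishing_orbit:
  assumes G: "G \<in> N" and "finite Q" and v: "v \<notin> cspan cm (G \<union> Q)"
    and S: "S \<in> J" and y: "y \<in> nest_succ G"
  shows "S y \<in> vanishing_orbit Q v"
proof -
  have "closed (cspan cm (G \<union> Q))"
    by (rule closed_cspan_Un_finite[OF \<open>finite Q\<close> nest_closed[OF G] nest_csubspace[OF G]])
  then obtain f where f: "cdual cm f" "\<forall>x\<in>cspan cm (G \<union> Q). f x = 0" "f v = 1"
    using exists_cdual_separating[OF _ csubspace_cspan v] by blast
  have "\<forall>x\<in>G. f x = 0" "\<forall>q\<in>Q. f q = 0" using f(2) cspan_superset[of "G \<union> Q"] by auto
  then have "S \<circ> (\<lambda>x. cm (f x) y) \<in> J"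
    using J_comp_nest_alg[OF rank_one_mem_nest_alg[OF f(1) _ y] S] by blast
  moreover have "(S \<circ> (\<lambda>x. cm (f x) y)) v = S y" using f(3) by simp
  moreover have "\<forall>q\<in>Q. (S \<circ> (\<lambda>x. cm (f x) y)) q = 0"
    using \<open>\<forall>q\<in>Q. f q = 0\<close> bop_zero[OF J_bop[OF S]] by simp
  ultimately show ?thesis
    unfolding vanishing_orbit_def by (intro CollectI exI[of _ "S \<circ> (\<lambda>x. cm (f x) y)"]) simp
qed

lemma csubspace_vimage_bop:
  assumes S: "bop cm S" and Y: "csubspace cm Y"
  shows "csubspace cm (S -` Y)"
  unfolding csubspace_def
proof (intro conjI ballI allI)
  show "0 \<in> S -` Y" using bop_zero[OF S] csubspace_0[OF Y] by simp
  show "x + y \<in> S -` Y" if "x \<in> S -` Y" "y \<in> S -` Y" for x y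
    using that bop_add[OF S] csubspace_add[OF Y] by simp
  show "cm c x \<in> S -` Y" if "x \<in> S -` Y" for c x
    using that bop_cm[OF S] csubspace_cm[OF Y] by simp
qed

definition succ_join :: "'a set \<Rightarrow> 'a \<Rightarrow> 'a set" where
  "succ_join Q v = cclspan cm (\<Union>{nest_succ G | G. G \<in> N \<and> v \<notin> cspan cm (G \<union> Q)})"

lemma succ_join_mem: "succ_join Q v \<in> N"
  unfolding succ_join_def by (rule nest_cclspan_Union) (auto simp: nest_succ_mem)

lemma nest_succ_subset_succ_join: "G \<in> N \<Longrightarrow> v \<notin> cspan cm (G \<union> Q) \<Longrightarrow> nest_succ G \<subseteq> succ_join Q v"
  unfolding succ_join_def
  using cclspan_superset[of "\<Union>{nest_succ G | G. G \<in> N \<and> v \<notin> cspan cm (G \<union> Q)}"] by blast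

lemma mem_cspan_succ_join_Un:
  assumes "finite Q"
  shows "v \<in> cspan cm (succ_join Q v \<union> Q)"
proof (rule ccontr)
  define K where "K = succ_join Q v"
  assume "v \<notin> cspan cm (succ_join Q v \<union> Q)"
  then have succ_K: "nest_succ K \<subseteq> K"
    unfolding K_def by (rule nest_succ_subset_succ_join[OF succ_join_mem])
  define C where "C = {F \<in> N. \<not> F \<subseteq> K}"
  have all: "\<forall>F\<in>C. v \<in> cspan cm (F \<union> Q)"
  proof
    fix F assume F: "F \<in> C"
    show "v \<in> cspan cm (F \<union> Q)"
    proof (rule ccontr)
      assume "v \<notin> cspan cm (F \<union> Q)"
      moreover have "F \<in> N" "\<not> F \<subseteq> K" using F unfolding C_def by auto
      ultimately show False
        using nest_succ_subset_succ_join[of F v Q] nest_succ_superset[of F] unfolding K_def by blast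
    qed
  qed
  have chain: "F \<subseteq> F' \<or> F' \<subseteq> F" if "F \<in> C" "F' \<in> C" for F F'
    using that nest_chain unfolding C_def by blast
  have csub: "csubspace cm F" if "F \<in> C" for F
    using that nest_csubspace unfolding C_def by blast
  have "v \<in> cspan cm (\<Inter>C \<union> Q)"
    by (rule cspan_Inter_chain_Un_finite[OF \<open>finite Q\<close> chain csub all])
  also have "\<Inter>C = nest_succ K" unfolding C_def nest_succ_def by simp
  also have "cspan cm (nest_succ K \<union> Q) \<subseteq> cspan cm (K \<union> Q)"
    using succ_K by (intro cspan_mono) blast
  finally have "v \<in> cspan cm (K \<union> Q)" .
  with \<open>v \<notin> cspan cm (succ_join Q v \<union> Q)\<close> show False unfolding K_def by blast
qed

lemma PhiJ_succ_join_subset: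
  assumes "finite Q"
  shows "PhiJ cm J (succ_join Q v) \<subseteq> closure (vanishing_orbit Q v)"
proof -
  have orbit: "closed (closure (vanishing_orbit Q v))" "csubspace cm (closure (vanishing_orbit Q v))"
    using csubspace_closure[OF csubspace_vanishing_orbit] by simp_all
  have "S ` succ_join Q v \<subseteq> closure (vanishing_orbit Q v)" if S: "S \<in> J" for S
  proof -
    have "closed (S -` closure (vanishing_orbit Q v))"
      using continuous_closed_vimage[OF orbit(1) linear_continuous_at[OF bop_bounded_linear[OF J_bop[OF S]]]] .
    moreover have "\<Union>{nest_succ G | G. G \<in> N \<and> v \<notin> cspan cm (G \<union> Q)} \<subseteq> S -` closure (vanishing_orbit Q v)"
      using image_nest_succ_subset_vanishing_orbit[OF _ \<open>finite Q\<close> _ S] closure_subset by blast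
    ultimately have "succ_join Q v \<subseteq> S -` closure (vanishing_orbit Q v)"
      unfolding succ_join_def by (rule cclspan_minimal[OF _ csubspace_vimage_bop[OF J_bop[OF S] orbit(2)]])
    then show ?thesis by blast
  qed
  then show ?thesis
    unfolding PhiJ_def by (intro cclspan_minimal[OF orbit]) blast
qed

lemma Mphi_decompose:
  assumes "finite Q"
  obtains k w where "v = k + w" "w \<in> cspan cm Q"
    "\<forall>T\<in>Mphi cm N (PhiJ cm J). T k \<in> closure (vanishing_orbit Q v)"
proof -
  have "v \<in> {k + w | k w. k \<in> succ_join Q v \<and> w \<in> cspan cm Q}"
    using mem_cspan_succ_join_Un[OF assms]
      cspan_Un_csubspace_subset[OF nest_csubspace[OF succ_join_mem[of Q v]], of Q] by blast
  then obtain k w where kw: "v = k + w" "k \<in> succ_join Q v" "w \<in> cspan cm Q" by blast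
  have "T k \<in> closure (vanishing_orbit Q v)" if T: "T \<in> Mphi cm N (PhiJ cm J)" for T
  proof -
    have "T ` succ_join Q v \<subseteq> PhiJ cm J (succ_join Q v)"
      using T succ_join_mem[of Q v] unfolding Mphi_def by blast
    then show ?thesis using kw(2) PhiJ_succ_join_subset[OF assms] by blast
  qed
  then have "\<forall>T\<in>Mphi cm N (PhiJ cm J). T k \<in> closure (vanishing_orbit Q v)" by blast
  with kw(1,3) show ?thesis by (rule that)
qed

lemma J_subset_Mphi: "J \<subseteq> Mphi cm N (PhiJ cm J)"
proof
  fix T assume T: "T \<in> J"
  have "T x \<in> PhiJ cm J E" if "x \<in> E" for E x
    unfolding PhiJ_def using T that cclspan_superset[of "{T x | T x. T \<in> J \<and> x \<in> E}"] by blast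
  then show "T \<in> Mphi cm N (PhiJ cm J)" unfolding Mphi_def using J_bop[OF T] by blast
qed

lemma Mphi_diff:
  assumes T: "T \<in> Mphi cm N (PhiJ cm J)" and S: "S \<in> Mphi cm N (PhiJ cm J)"
  shows "(\<lambda>x. T x - S x) \<in> Mphi cm N (PhiJ cm J)"
proof -
  have bT: "bop cm T" and bS: "bop cm S" using T S unfolding Mphi_def by auto
  have "bop cm (\<lambda>x. T x - S x)"
    unfolding bop_def
    using bounded_linear_sub[OF bop_bounded_linear[OF bT] bop_bounded_linear[OF bS]]
    by (simp add: bop_cm[OF bT] bop_cm[OF bS] cm_diff_right)
  moreover have "T x - S x \<in> PhiJ cm J E" if "E \<in> N" "x \<in> E" for E x
  proof -
    have "T x \<in> PhiJ cm J E" "S x \<in> PhiJ cm J E" using T S that unfolding Mphi_def by blast+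
    then show ?thesis
      unfolding PhiJ_def by (rule subspace_diff[OF csubspace_imp_subspace[OF csubspace_cclspan]])
  qed
  ultimately show ?thesis unfolding Mphi_def by blast
qed

text \<open>Write v = k + w with w \<in> span Q as in Mphi_decompose. After approximating T on Q by S' \<in> J,
  the remainder T - S' is small on w, and its value at k is approximated by some S \<in> J
  vanishing on Q; then S + S' approximates T on insert v Q.\<close>

lemma Mphi_strong_approx_insert:
  assumes "finite Q"
    and IH: "\<And>T \<epsilon>. T \<in> Mphi cm N (PhiJ cm J) \<Longrightarrow> 0 < \<epsilon> \<Longrightarrow> \<exists>S\<in>J. \<forall>x\<in>Q. norm (S x - T x) < \<epsilon>"
    and T: "T \<in> Mphi cm N (PhiJ cm J)" and "0 < \<delta>"
  shows "\<exists>S\<in>J. \<forall>x\<in>insert v Q. norm (S x - T x) < \<delta>"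
proof -
  obtain k w where kw: "v = k + w" "w \<in> cspan cm Q"
    and orbit: "\<forall>T\<in>Mphi cm N (PhiJ cm J). T k \<in> closure (vanishing_orbit Q v)"
    using Mphi_decompose[OF \<open>finite Q\<close>] by blast
  obtain B where "B \<ge> 0"
    and B: "\<And>L \<eta>. bop cm L \<Longrightarrow> 0 \<le> \<eta> \<Longrightarrow> \<forall>q\<in>Q. norm (L q) \<le> \<eta> \<Longrightarrow> norm (L w) \<le> B * \<eta>"
    using cspan_bop_bound[OF kw(2)] by blast
  define \<epsilon> where "\<epsilon> = \<delta> / (2 * (B + 1))"
  have "0 < \<epsilon>" "\<epsilon> \<le> \<delta> / 2" "B * \<epsilon> < \<delta> / 2"
    using \<open>0 < \<delta>\<close> \<open>B \<ge> 0\<close> by (auto simp: \<epsilon>_def field_simps)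
  obtain S' where S': "S' \<in> J" "\<forall>q\<in>Q. norm (S' q - T q) < \<epsilon>" using IH[OF T \<open>0 < \<epsilon>\<close>] by blast
  define R where "R x = T x - S' x" for x
  have R: "R \<in> Mphi cm N (PhiJ cm J)"
    unfolding R_def by (rule Mphi_diff[OF T subsetD[OF J_subset_Mphi S'(1)]])
  then have bR: "bop cm R" unfolding Mphi_def by blast
  have "norm (R w) \<le> B * \<epsilon>"
    using B[OF bR] S'(2) \<open>0 < \<epsilon>\<close> by (simp add: R_def norm_minus_commute less_imp_le)
  obtain y where "y \<in> vanishing_orbit Q v" "dist y (R k) < \<delta> / 2"
    using orbit R \<open>0 < \<delta>\<close> unfolding closure_approachable by (meson half_gt_zero)
  then obtain S where S: "S \<in> J" "\<forall>q\<in>Q. S q = 0" "norm (S v - R k) < \<delta> / 2"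
    unfolding vanishing_orbit_def by (auto simp: dist_norm)
  have "norm (S x + S' x - T x) < \<delta>" if x: "x \<in> insert v Q" for x
  proof (cases "x = v")
    case True
    have "S v + S' v - T v = (S v - R k) - R w"
      using bop_add[OF bR, of k w] kw(1) by (simp add: R_def algebra_simps)
    then have "norm (S v + S' v - T v) \<le> norm (S v - R k) + norm (R w)"
      by (metis norm_triangle_ineq4)
    then show ?thesis
      using True S(3) \<open>norm (R w) \<le> B * \<epsilon>\<close> \<open>B * \<epsilon> < \<delta> / 2\<close> by simp
  next
    case False
    then have "x \<in> Q" using x by simp
    then have "norm (S x + S' x - T x) < \<epsilon>" using S(2) S'(2) by simp
    then show ?thesis using \<open>\<epsilon> \<le> \<delta> / 2\<close> \<open>0 < \<delta>\<close> by simp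
  qed
  then have "\<forall>x\<in>insert v Q. norm ((\<lambda>x. S x + S' x) x - T x) < \<delta>" by simp
  then show ?thesis using J_add[OF S(1) S'(1)] by (rule bexI)
qed

lemma Mphi_strong_approx:
  assumes "finite P" "T \<in> Mphi cm N (PhiJ cm J)" "0 < \<delta>"
  shows "\<exists>S\<in>J. \<forall>x\<in>P. norm (S x - T x) < \<delta>"
  using assms
proof (induction P arbitrary: T \<delta>)
  case empty
  then show ?case using J_zero by blast
next
  case (insert v Q)
  show ?case by (rule Mphi_strong_approx_insert[OF insert.hyps(1) insert.IH insert.prems])
qed

lemma Mphi_PhiJ_eq:
  assumes "wot_closed cm J"
  shows "Mphi cm N (PhiJ cm J) = J"
proof
  show "Mphi cm N (PhiJ cm J) \<subseteq> J"
  proof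
    fix T assume T: "T \<in> Mphi cm N (PhiJ cm J)"
    then have "bop cm T" unfolding Mphi_def by blast
    then show "T \<in> J"
      by (rule wot_closed_mem_if_strong_approx[OF assms _ Mphi_strong_approx[OF _ T]])
  qed
qed (rule J_subset_Mphi)

end

theorem mainTheorem11:
  fixes cm :: "complex \<Rightarrow> 'a::banach \<Rightarrow> 'a"
    and N :: "'a set set"
    and J :: "('a \<Rightarrow> 'a) set"
  assumes "cbanach cm"
    and "nest cm N"
    and "bimodule cm N J"
    and "wot_closed cm J"
  shows "{T \<in> J. finite_rank cm T} = {T \<in> Mphi cm N (PhiJ cm J). finite_rank cm T}"
proof -
  interpret nest_bimodule cm N J
    using assms(1-3) by (simp add: nest_bimodule_def nest_bimodule_axioms_def complex_banach_def)
  show ?thesis using Mphi_PhiJ_eq[OF assms(4)] by simp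
qed

end
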